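(* Let $H$ be a real Hilbert space, $M\ge 1$, $I=\{1,\dots,M\}$, and let $f_i,h_i,T_i$ ($i\in I$) satisfy Assumption (A1)–(A4) below, with parameter sequences $\{\theta_n\},\{\lambda_n\},\{\beta_n\},\{\alpha_n\}$ satisfying Condition (C) below. Suppose that for each $i\in I$, $X_i\subset H$ is a bounded, closed and convex set with $S\subset X_i$, where $S=\bigcap_{i=1}^M \mathrm{Fix}\,T_i$. Consider the Distributed Accelerated Incremental Algorithm described below, modified in one of the following two ways: either the step defining $y^{(i)}_n$ is replaced by $$y^{(i)}_{n}=P_{X_{i}}\big(\mathrm{prox}_{\lambda_{n}f_{i}}(z^{(i)}_{n}+\lambda_{n}d^{(i)}_{n+1})\big),$$ or the step defining $w^{(i+1)}_n$ is replaced by $$w^{(i+1)}_{n}=P_{X_{i}}\big(\alpha_{n}u^{(i)}+(1-\alpha_{n})T_{i}(y^{(i)}_{n})\big),$$ where $P_{X_i}$ denotes the metric projection onto $X_i$. Then for each $i\in I$ the sequence $\{y^{(i)}_n\}$ generated by the resulting algorithm is bounded.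
   Context: Assumption (A1): each $f_i:H\to\mathbb{R}$ is continuous and convex. (A2): each $h_i:H\to\mathbb{R}$ is convex and Fréchet differentiable, and $\nabla h_i$ is $(1/L_i)$-Lipschitz continuous for some $L_i>0$. (A3): each $T_i:H\to H$ is firmly nonexpansive, i.e. $\|T_ix-T_iy\|^2\le\langle T_ix-T_iy,x-y\rangle$ for all $x,y$. (A4): $S=\bigcap_{i=1}^M\mathrm{Fix}\,T_i\neq\emptyset$ (where $\mathrm{Fix}\,T_i=\{y:T_iy=y\}$) and, with $\psi=\sum_{i=1}^M(f_i+h_i)$, the set $\Omega=\{\hat x\in S:\psi(\hat x)=\min_{x\in S}\psi(x)\}$ is nonempty. Condition (C): $\{\theta_n\},\{\lambda_n\},\{\beta_n\},\{\alpha_n\}$ are decreasing real sequences converging to $0$ with $\theta_n\in[0,1)$, $\lambda_n\in(0,2\min_{i\in I}L_i]$, $\beta_n\in(0,1]$, $\alpha_n\in(0,1]$, and: (C1) $\sum_n\alpha_n=\infty$; (C2) $\lim_n\frac{1}{\alpha_{n+1}}\big|\frac{1}{\lambda_{n+1}}-\frac{1}{\lambda_n}\big|=0$; (C3) $\lim_n\frac{1}{\lambda_{n+1}}\big|1-\frac{\alpha_n}{\alpha_{n+1}}\big|=0$; (C4) $\lim_n\frac{\alpha_n}{\lambda_n}=0$; (C5) $\lim_n\frac{\theta_n}{\alpha_{n+1}\lambda_{n+1}}=0$; (C6) $\frac{\lambda_n}{\lambda_{n+1}}\le\sigma$ for some $\sigma\ge1$ and all $n$; (C7) $\lim_n\frac{\beta_n}{\alpha_{n+1}}=0$.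 For proper lsc convex $g$ and $\lambda>0$, $\mathrm{prox}_{\lambda g}(x)=\arg\min_y\{g(y)+\frac{1}{2\lambda}\|x-y\|^2\}$. Distributed Accelerated Incremental Algorithm: choose $x_1\in H$, $w^{(i)}_0,z^{(i)}_0,u^{(i)}\in H$ and set $d^{(i)}_1=-\nabla h_i(z^{(i)}_0)$ ($i\in I$). For $n=1,2,\dots$: set $w^{(1)}_n=x_n$; for $i=1,\dots,M$ compute $z^{(i)}_n=w^{(i)}_n+\theta_n(w^{(i)}_n-w^{(i)}_{n-1})$, $d^{(i)}_{n+1}=-\nabla h_i(z^{(i)}_n)+\beta_nd^{(i)}_n$, $y^{(i)}_n=\mathrm{prox}_{\lambda_nf_i}(z^{(i)}_n+\lambda_nd^{(i)}_{n+1})$, $w^{(i+1)}_n=\alpha_nu^{(i)}+(1-\alpha_n)T_i(y^{(i)}_n)$; then set $x_{n+1}=w^{(M+1)}_n$. *)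

theory Defs
  imports "HOL-Analysis.Analysis"
begin

text \<open>Metric projection onto a set X (in a real Hilbert space; unique for
  nonempty closed convex X).\<close>
definition metric_proj :: "'a::real_inner set \<Rightarrow> 'a \<Rightarrow> 'a" where
  "metric_proj X x = (THE p. p \<in> X \<and> (\<forall>q\<in>X. norm (x - p) \<le> norm (x - q)))"

definition prox :: "real \<Rightarrow> ('a::real_inner \<Rightarrow> real) \<Rightarrow> 'a \<Rightarrow> 'a" where
  "prox l g x = (THE p. \<forall>q. g p + (norm (x - p))\<^sup>2 / (2 * l) \<le> g q + (norm (x - q))\<^sup>2 / (2 * l))"

definition firmly_nonexpansive :: "('a::real_inner \<Rightarrow> 'a) \<Rightarrow> bool" where
  "firmly_nonexpansive T \<longleftrightarrow> (\<forall>x y. (norm (T x - T y))\<^sup>2 \<le> inner (T x - T y) (x - y))"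

end

theory Submission
  imports Defs
begin

(*
  If the projection is applied to y, the iterates y lie in the bounded set X_i.  If it is
  applied to w, every w^(i) eventually lies in some bounded X_j (for i = 1 because
  w^(1)_(n+1) = x_(n+1) = w^(M+1)_n).  Then the inertial points z are bounded, hence so are the
  gradients of h_i at them (Lipschitz continuity), the directions d (their recursion is a
  contraction plus a bounded term once beta_n < 1/2) and the prox arguments.  Finally prox
  maps bounded sets to bounded sets, uniformly for step sizes lambda <= Lambda, because a
  continuous convex f is bounded below by f 0 - 1 - kappa * norm p.

  Both prox and the metric projection are defined by THE; their objectives are strongly
  midpoint convex on a complete space, so the minimiser exists uniquely and THE denotes it.
*)

lemma norm_diff_midpoint_sq:
  fixes v a b :: "'a::real_inner"
  shows "(norm (v - (1/2) *\<^sub>R (a + b)))\<^sup>2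
    = ((norm (v - a))\<^sup>2 + (norm (v - b))\<^sup>2) / 2 - (norm (a - b))\<^sup>2 / 4"
  by (simp add: power2_norm_eq_inner inner_simps inner_commute algebra_simps field_simps)

lemma strongly_midpoint_convex_has_unique_min:
  fixes g :: "'a::{real_normed_vector,complete_space} \<Rightarrow> real"
  assumes K: "convex K" "closed K" "K \<noteq> {}" and cont: "continuous_on K g"
    and bdd: "\<And>p. p \<in> K \<Longrightarrow> lb \<le> g p" and \<mu>: "\<mu> > 0"
    and strong: "\<And>a b. a \<in> K \<Longrightarrow> b \<in> K \<Longrightarrow>
                   g ((1/2) *\<^sub>R (a + b)) \<le> (g a + g b) / 2 - \<mu> * (norm (a - b))\<^sup>2"
  shows "\<exists>!p. p \<in> K \<and> (\<forall>q\<in>K. g p \<le> g q)"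
proof -
  have mid_in: "(1/2) *\<^sub>R (a + b) \<in> K" if "a \<in> K" "b \<in> K" for a b
    using convexD[OF K(1) that, of "1/2" "1/2"] by (simp add: scaleR_right_distrib)
  define m where "m = Inf (g ` K)"
  have m_le: "m \<le> g q" if "q \<in> K" for q
    unfolding m_def using bdd that by (intro cInf_lower) (auto simp: bdd_below_def)
  have "\<exists>p\<in>K. g p < m + 1 / (real k + 1)" for k
    using cInf_lessD[of "g ` K" "m + 1 / (real k + 1)"] K(3) unfolding m_def by auto
  then obtain s where s: "\<And>k. s k \<in> K" "\<And>k. g (s k) < m + 1 / (real k + 1)" by metis
  \<comment> \<open>strong convexity turns a minimising sequence into a Cauchy sequence\<close>
  have dist_s: "\<mu> * (norm (s i - s j))\<^sup>2 < 1 / (real N + 1)" if "N \<le> i" "N \<le> j" for N i j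
  proof -
    have "1 / (real i + 1) \<le> 1 / (real N + 1)" "1 / (real j + 1) \<le> 1 / (real N + 1)"
      using that by (auto simp: frac_le)
    then have "g (s i) < m + 1 / (real N + 1)" "g (s j) < m + 1 / (real N + 1)"
      using s(2)[of i] s(2)[of j] by linarith+
    then have "(g (s i) + g (s j)) / 2 - m < 1 / (real N + 1)"
      by (simp add: field_simps)
    moreover have "\<mu> * (norm (s i - s j))\<^sup>2 \<le> (g (s i) + g (s j)) / 2 - m"
      using strong[OF s(1) s(1), of i j] m_le[OF mid_in[OF s(1) s(1)], of i j] by linarith
    ultimately show ?thesis by linarith
  qed
  have "Cauchy s"
  proof (rule CauchyI)
    fix e :: real assume e: "e > 0"
    obtain N :: nat where N: "inverse (real (Suc N)) < \<mu> * e\<^sup>2"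
      using reals_Archimedean \<mu> e by (metis mult_pos_pos zero_less_power)
    have "norm (s i - s j) < e" if "N \<le> i" "N \<le> j" for i j
    proof -
      have "\<mu> * (norm (s i - s j))\<^sup>2 < \<mu> * e\<^sup>2"
        using dist_s[OF that] N by (simp add: inverse_eq_divide add.commute)
      then show ?thesis using \<mu> e by (simp add: power_less_imp_less_base)
    qed
    then show "\<exists>N. \<forall>i\<ge>N. \<forall>j\<ge>N. norm (s i - s j) < e" by blast
  qed
  then obtain p where p: "s \<longlonglongrightarrow> p" using convergent_eq_Cauchy by blast
  have p_in: "p \<in> K" using closed_sequentially[OF K(2) s(1) p] .
  have "(\<lambda>k. g (s k)) \<longlonglongrightarrow> g p"
    using continuous_on_tendsto_compose[OF cont p p_in] s(1) by simp
  moreover have "(\<lambda>k. g (s k)) \<longlonglongrightarrow> m"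
  proof (rule real_tendsto_sandwich[where f="\<lambda>k. m" and h="\<lambda>k. m + 1 / (real k + 1)"])
    show "(\<lambda>k. m + 1 / (real k + 1)) \<longlonglongrightarrow> m"
      using LIMSEQ_inverse_real_of_nat_add[of m] by (simp add: inverse_eq_divide add.commute)
    show "\<forall>\<^sub>F k in sequentially. g (s k) \<le> m + 1 / (real k + 1)"
      using s(2) by (intro always_eventually allI less_imp_le)
  qed (use m_le s in auto)
  ultimately have gp: "g p = m" by (rule LIMSEQ_unique)
  show ?thesis
  proof (rule ex1I[of _ p])
    show "p \<in> K \<and> (\<forall>q\<in>K. g p \<le> g q)" using p_in gp m_le by auto
  next
    fix p' assume p': "p' \<in> K \<and> (\<forall>q\<in>K. g p' \<le> g q)"
    have p'_in: "p' \<in> K" and "g p' \<le> m" using p' p_in gp by auto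
    then have "\<mu> * (norm (p' - p))\<^sup>2 \<le> 0"
      using strong[OF p'_in p_in] m_le[OF mid_in[OF p'_in p_in]] gp by argo
    then show "p' = p" using \<mu> by (simp add: mult_le_0_iff)
  qed
qed

lemma metric_proj_mem:
  fixes X :: "'a::{real_inner,complete_space} set"
  assumes "convex X" "closed X" "X \<noteq> {}"
  shows "metric_proj X v \<in> X"
proof -
  have "\<exists>!p. p \<in> X \<and> (\<forall>q\<in>X. (norm (v - p))\<^sup>2 \<le> (norm (v - q))\<^sup>2)"
    by (rule strongly_midpoint_convex_has_unique_min[OF assms, where lb=0 and \<mu>="1/4"])
       (auto intro!: continuous_intros simp: norm_diff_midpoint_sq)
  then have "\<exists>!p. p \<in> X \<and> (\<forall>q\<in>X. norm (v - p) \<le> norm (v - q))"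
    by (simp add: norm_le_square)
  from theI'[OF this] show ?thesis unfolding metric_proj_def by blast
qed

lemma convex_on_ge_norm_affine:
  fixes g :: "'a::real_normed_vector \<Rightarrow> real"
  assumes convex: "convex_on UNIV g" and cont: "isCont g 0"
  obtains \<kappa> where "\<kappa> > 0" "\<And>p. g 0 - 1 - \<kappa> * norm p \<le> g p"
proof -
  obtain \<delta> where \<delta>: "\<delta> > 0" and near: "\<And>p. norm p < \<delta> \<Longrightarrow> g 0 - 1 < g p"
    using cont unfolding continuous_at_eps_delta dist_real_def dist_norm
    by (metis abs_diff_less_iff diff_zero zero_less_one)
  have "g 0 - 1 - 2 / \<delta> * norm p \<le> g p" for p
  proof (cases "norm p < \<delta>")
    case True
    have "0 \<le> 2 / \<delta> * norm p" using \<delta> by simp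
    then show ?thesis using near[OF True] by linarith
  next
    case False
    then have "\<delta> \<le> norm p" "0 < norm p" using \<delta> by auto
    define t where "t = \<delta> / (2 * norm p)"
    have t: "0 < t" "t \<le> 1" "1 / t = 2 / \<delta> * norm p" "norm (t *\<^sub>R p) < \<delta>"
      using \<open>\<delta> \<le> norm p\<close> \<open>0 < norm p\<close> \<delta> by (auto simp: t_def field_simps)
    \<comment> \<open>convexity along the segment from 0 to p, evaluated at a point close to 0\<close>
    have "g 0 - 1 < (1 - t) * g 0 + t * g p"
      using near[OF t(4)] convex_onD[OF convex, of t 0 p] t by simp
    then have "g 0 - 1 / t < g p" using t(1) by (simp add: field_simps)
    then show ?thesis using t(3) by simp
  qed
  then show ?thesis using \<delta> that[of "2 / \<delta>"] by simp
qed

lemma prox_minimal: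
  fixes f :: "'a::{real_inner,complete_space} \<Rightarrow> real"
  assumes l: "l > 0" and convex: "convex_on UNIV f" and cont: "continuous_on UNIV f"
  shows "f (prox l f v) + (norm (v - prox l f v))\<^sup>2 / (2 * l) \<le> f q + (norm (v - q))\<^sup>2 / (2 * l)"
proof -
  obtain \<kappa> where \<kappa>: "\<kappa> > 0" "\<And>p. f 0 - 1 - \<kappa> * norm p \<le> f p"
    using convex_on_ge_norm_affine[OF convex] cont by (metis continuous_on_eq_continuous_at open_UNIV UNIV_I)
  define G where "G p = f p + (norm (v - p))\<^sup>2 / (2 * l)" for p
  have "\<exists>!p. p \<in> UNIV \<and> (\<forall>q\<in>UNIV. G p \<le> G q)"
  proof (rule strongly_midpoint_convex_has_unique_min[where lb="f 0 - 1 - \<kappa> * norm v - l * \<kappa>\<^sup>2 / 2" and \<mu>="1 / (8 * l)"])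
    show "continuous_on UNIV G" unfolding G_def using l by (intro continuous_intros cont) auto
    fix p :: 'a
    have "\<kappa> * norm p \<le> \<kappa> * norm (v - p) + \<kappa> * norm v"
      using mult_left_mono[OF norm_triangle_sub[of p v], of \<kappa>] \<kappa>(1)
      by (simp add: distrib_left norm_minus_commute)
    moreover have "- (l * \<kappa>\<^sup>2 / 2) \<le> (norm (v - p))\<^sup>2 / (2 * l) - \<kappa> * norm (v - p)"
    proof -
      have "0 \<le> (norm (v - p) - l * \<kappa>)\<^sup>2 / (2 * l)" using l by simp
      then show ?thesis using l by (simp add: field_simps power2_eq_square)
    qed
    ultimately show "f 0 - 1 - \<kappa> * norm v - l * \<kappa>\<^sup>2 / 2 \<le> G p"
      unfolding G_def using \<kappa>(2)[of p] by linarith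
  next
    fix a b :: 'a
    have "f ((1/2) *\<^sub>R (a + b)) \<le> (f a + f b) / 2"
      using convex_onD[OF convex, of "1/2" a b] by (simp add: algebra_simps)
    moreover have "(norm (v - (1/2) *\<^sub>R (a + b)))\<^sup>2 / (2 * l)
        = ((norm (v - a))\<^sup>2 / (2 * l) + (norm (v - b))\<^sup>2 / (2 * l)) / 2 - 1 / (8 * l) * (norm (a - b))\<^sup>2"
      unfolding norm_diff_midpoint_sq using l by (simp add: field_simps)
    ultimately show "G ((1/2) *\<^sub>R (a + b)) \<le> (G a + G b) / 2 - 1 / (8 * l) * (norm (a - b))\<^sup>2"
      unfolding G_def by argo
  qed (use l in auto)
  then have "\<exists>!p. \<forall>q. G p \<le> G q" by simp
  from theI'[OF this] show ?thesis unfolding prox_def G_def by simp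
qed

lemma norm_prox_le:
  fixes f :: "'a::{real_inner,complete_space} \<Rightarrow> real"
  assumes l: "l > 0" and convex: "convex_on UNIV f" and cont: "continuous_on UNIV f"
    and lower: "\<And>p. f 0 - 1 - \<kappa> * norm p \<le> f p"
  shows "norm (prox l f v) \<le> max 1 (2 * norm v + 2 * l * (1 + \<kappa>))"
proof -
  define p where "p = prox l f v"
  \<comment> \<open>compare the prox objective at p with its value at 0\<close>
  have "2 * l * (f p + (norm (v - p))\<^sup>2 / (2 * l)) \<le> 2 * l * (f 0 + (norm v)\<^sup>2 / (2 * l))"
    using prox_minimal[OF l convex cont, of v 0] l unfolding p_def by (intro mult_left_mono) auto
  then have "(norm (v - p))\<^sup>2 \<le> (norm v)\<^sup>2 + 2 * l * (f 0 - f p)"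
    using l by (simp add: algebra_simps)
  also have "\<dots> \<le> (norm v)\<^sup>2 + 2 * l * (1 + \<kappa> * norm p)"
    using lower[of p] l by simp
  finally have "(norm p - norm v)\<^sup>2 \<le> (norm v)\<^sup>2 + 2 * l * (1 + \<kappa> * norm p)"
    using norm_triangle_ineq3[of p v] abs_le_square_iff[of "norm p - norm v" "norm (v - p)"]
    by (simp add: norm_minus_commute)
  then have quad: "norm p * norm p \<le> norm p * (2 * norm v + 2 * l * \<kappa>) + 2 * l"
    by (simp add: power2_eq_square algebra_simps)
  show ?thesis
  proof (cases "norm p \<le> 1")
    case False
    then have "l \<le> l * norm p" using l by simp
    then have "norm p * norm p \<le> norm p * (2 * norm v + 2 * l * (1 + \<kappa>))"
      using quad by (simp add: algebra_simps)
    then have "norm p \<le> 2 * norm v + 2 * l * (1 + \<kappa>)"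
      by (rule mult_left_le_imp_le) (use False in auto)
    then show ?thesis unfolding p_def by simp
  qed (simp add: p_def)
qed

lemma bounded_prox_image:
  fixes f :: "'a::{real_inner,complete_space} \<Rightarrow> real"
  assumes convex: "convex_on UNIV f" and cont: "continuous_on UNIV f" and V: "bounded V"
  shows "bounded {prox l f v | l v. 0 < l \<and> l \<le> \<Lambda> \<and> v \<in> V}"
proof -
  obtain \<kappa> where \<kappa>: "\<kappa> > 0" "\<And>p. f 0 - 1 - \<kappa> * norm p \<le> f p"
    using convex_on_ge_norm_affine[OF convex] cont
    by (metis continuous_on_eq_continuous_at open_UNIV UNIV_I)
  obtain R where R: "\<And>v. v \<in> V \<Longrightarrow> norm v \<le> R" using V bounded_iff by metis
  have "norm (prox l f v) \<le> max 1 (2 * R + 2 * \<Lambda> * (1 + \<kappa>))"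
    if "0 < l" "l \<le> \<Lambda>" "v \<in> V" for l v
  proof -
    have "2 * l * (1 + \<kappa>) \<le> 2 * \<Lambda> * (1 + \<kappa>)" using that \<kappa>(1) by simp
    then show ?thesis using norm_prox_le[OF that(1) convex cont \<kappa>(2), of v] R[OF that(3)] by linarith
  qed
  then show ?thesis unfolding bounded_iff by blast
qed

lemma Bseq_damped_recursion:
  fixes d g :: "nat \<Rightarrow> 'a::real_normed_vector"
  assumes rec: "\<And>n. d (Suc n) = g n + \<beta> n *\<^sub>R d n"
    and g: "\<And>n. norm (g n) \<le> K" and \<beta>: "\<beta> \<longlonglongrightarrow> 0"
  shows "Bseq d"
proof -
  obtain N where N: "\<And>n. N \<le> n \<Longrightarrow> \<bar>\<beta> n\<bar> < 1/2"
    using LIMSEQ_D[OF \<beta>, of "1/2"] by auto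
  have "norm (d n) \<le> max (2 * K) (norm (d N))" if "N \<le> n" for n
    using that
  proof (induction rule: dec_induct)
    case (step n)
    have "norm (d (Suc n)) \<le> norm (g n) + \<bar>\<beta> n\<bar> * norm (d n)"
      unfolding rec using norm_triangle_ineq[of "g n" "\<beta> n *\<^sub>R d n"] by simp
    also have "\<dots> \<le> K + 1/2 * max (2 * K) (norm (d N))"
      using g[of n] N[OF step.hyps(1)] step.IH
      by (intro add_mono mult_mono) auto
    finally show ?case by linarith
  qed simp
  then have "Bseq (\<lambda>n. d (n + N))" by (intro BseqI'[where K="max (2 * K) (norm (d N))"]) simp
  then show ?thesis by (rule Bseq_offset)
qed

lemma bounded_inertial_prox_iterates:
  fixes f :: "'a::{real_inner,complete_space} \<Rightarrow> real" and g :: "'a \<Rightarrow> 'a"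
    and w z d y :: "nat \<Rightarrow> 'a" and \<theta> \<beta> lam :: "nat \<Rightarrow> real"
  assumes convex: "convex_on UNIV f" and cont: "continuous_on UNIV f"
    and lipschitz: "\<And>p q. norm (g p - g q) \<le> c * norm (p - q)"
    and w: "Bseq w" and \<theta>: "Bseq \<theta>" and \<beta>: "\<beta> \<longlonglongrightarrow> 0"
    and lam: "Bseq lam" "\<And>n. n \<ge> 1 \<Longrightarrow> 0 < lam n"
    and z_def: "\<And>n. n \<ge> 1 \<Longrightarrow> z n = w n + \<theta> n *\<^sub>R (w n - w (n - 1))"
    and d_rec: "\<And>n. n \<ge> 1 \<Longrightarrow> d (Suc n) = - g (z n) + \<beta> n *\<^sub>R d n"
    and y_def: "\<And>n. n \<ge> 1 \<Longrightarrow> y n = prox (lam n) f (z n + lam n *\<^sub>R d (Suc n))"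
  shows "bounded (y ` {1..})"
proof -
  obtain B \<Theta> \<Lambda> where B: "\<And>n. norm (w n) \<le> B" and \<Theta>: "\<And>n. \<bar>\<theta> n\<bar> \<le> \<Theta>"
    and \<Lambda>: "\<And>n. \<bar>lam n\<bar> \<le> \<Lambda>"
    using w \<theta> lam(1) by (metis BseqE real_norm_def)
  define Z where "Z = B + \<Theta> * (2 * B)"
  have z: "norm (z n) \<le> Z" if "n \<ge> 1" for n
  proof -
    have "norm (w n - w (n - 1)) \<le> 2 * B"
      using norm_triangle_ineq4[of "w n" "w (n - 1)"] B[of n] B[of "n - 1"] by linarith
    then have "\<bar>\<theta> n\<bar> * norm (w n - w (n - 1)) \<le> \<Theta> * (2 * B)"
      using \<Theta>[of n] by (intro mult_mono) auto
    then show ?thesis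
      unfolding z_def[OF that] Z_def
      using norm_triangle_ineq[of "w n" "\<theta> n *\<^sub>R (w n - w (n - 1))"] B[of n] by simp
  qed
  define G where "G = norm (g 0) + \<bar>c\<bar> * Z"
  have gz: "norm (g (z n)) \<le> G" if "n \<ge> 1" for n
  proof -
    have "norm (g (z n)) \<le> norm (g 0) + norm (g (z n) - g 0)"
      using norm_triangle_sub[of "g (z n)" "g 0"] by simp
    moreover have "norm (g (z n) - g 0) \<le> \<bar>c\<bar> * norm (z n)"
      using lipschitz[of "z n" 0] mult_right_mono[OF abs_ge_self[of c] norm_ge_zero[of "z n"]] by simp
    moreover have "\<bar>c\<bar> * norm (z n) \<le> \<bar>c\<bar> * Z" using z[OF that] by (simp add: mult_left_mono)
    ultimately show ?thesis unfolding G_def by linarith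
  qed
  have "Bseq (\<lambda>k. d (k + 1))"
  proof (rule Bseq_damped_recursion)
    show "d (Suc k + 1) = - g (z (k + 1)) + \<beta> (k + 1) *\<^sub>R d (k + 1)" for k
      using d_rec[of "k + 1"] by simp
    show "norm (- g (z (k + 1))) \<le> G" for k using gz[of "k + 1"] by simp
    show "(\<lambda>k. \<beta> (k + 1)) \<longlonglongrightarrow> 0" using LIMSEQ_ignore_initial_segment[OF \<beta>] .
  qed
  then obtain D where D: "\<And>n. norm (d n) \<le> D" by (metis Bseq_offset BseqE)
  have v: "norm (z n + lam n *\<^sub>R d (Suc n)) \<le> Z + \<Lambda> * D" if "n \<ge> 1" for n
  proof -
    have "\<bar>lam n\<bar> * norm (d (Suc n)) \<le> \<Lambda> * D"
      using \<Lambda>[of n] D[of "Suc n"] by (intro mult_mono) auto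
    then show ?thesis using norm_triangle_ineq[of "z n" "lam n *\<^sub>R d (Suc n)"] z[OF that] by simp
  qed
  have "y n \<in> {prox l f v | l v. 0 < l \<and> l \<le> \<Lambda> \<and> v \<in> cball 0 (Z + \<Lambda> * D)}"
    if "n \<ge> 1" for n
    using y_def[OF that] lam(2)[OF that] \<Lambda>[of n] v[OF that] by auto
  then have "y ` {1..} \<subseteq> {prox l f v | l v. 0 < l \<and> l \<le> \<Lambda> \<and> v \<in> cball 0 (Z + \<Lambda> * D)}"
    by auto
  then show ?thesis
    using bounded_prox_image[OF convex cont bounded_cball] bounded_subset by blast
qed

theorem lemma1:
  fixes M :: nat
    and f h :: "nat \<Rightarrow> 'a::{real_inner, complete_space} \<Rightarrow> real"
    and gh :: "nat \<Rightarrow> 'a \<Rightarrow> 'a"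
    and L :: "nat \<Rightarrow> real"
    and T :: "nat \<Rightarrow> 'a \<Rightarrow> 'a"
    and X :: "nat \<Rightarrow> 'a set"
    and \<theta> lam \<beta> \<alpha> :: "nat \<Rightarrow> real"
    and u :: "nat \<Rightarrow> 'a"
    and x :: "nat \<Rightarrow> 'a"
    and w z d y :: "nat \<Rightarrow> nat \<Rightarrow> 'a"
    and proj_on_y :: bool
  assumes M: "M \<ge> 1"
    \<comment> \<open>(A1)\<close>
    and A1: "\<And>i. i \<in> {1..M} \<Longrightarrow> continuous_on UNIV (f i) \<and> convex_on UNIV (f i)"
    \<comment> \<open>(A2): gh i is the gradient of h i, (1/L i)-Lipschitz\<close>
    and A2_convex: "\<And>i. i \<in> {1..M} \<Longrightarrow> convex_on UNIV (h i)"
    and A2_grad: "\<And>i p. i \<in> {1..M} \<Longrightarrow> (h i has_derivative (\<lambda>v. inner (gh i p) v)) (at p)"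
    and A2_L: "\<And>i. i \<in> {1..M} \<Longrightarrow> L i > 0"
    and A2_lip: "\<And>i p q. i \<in> {1..M} \<Longrightarrow> norm (gh i p - gh i q) \<le> (1 / L i) * norm (p - q)"
    \<comment> \<open>(A3)\<close>
    and A3: "\<And>i. i \<in> {1..M} \<Longrightarrow> firmly_nonexpansive (T i)"
    \<comment> \<open>(A4)\<close>
    and A4_S: "(\<Inter>i\<in>{1..M}. {p. T i p = p}) \<noteq> {}"
    and A4_Omega: "\<exists>xh \<in> (\<Inter>i\<in>{1..M}. {p. T i p = p}).
                    \<forall>p \<in> (\<Inter>i\<in>{1..M}. {p. T i p = p}).
                      (\<Sum>i\<in>{1..M}. f i xh + h i xh) \<le> (\<Sum>i\<in>{1..M}. f i p + h i p)"
    \<comment> \<open>Condition (C)\<close>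
    and C_dec: "\<And>n. n \<ge> 1 \<Longrightarrow> \<theta> (Suc n) \<le> \<theta> n \<and> lam (Suc n) \<le> lam n \<and> \<beta> (Suc n) \<le> \<beta> n \<and> \<alpha> (Suc n) \<le> \<alpha> n"
    and C_lim: "\<theta> \<longlonglongrightarrow> 0" "lam \<longlonglongrightarrow> 0" "\<beta> \<longlonglongrightarrow> 0" "\<alpha> \<longlonglongrightarrow> 0"
    and C_theta: "\<And>n. n \<ge> 1 \<Longrightarrow> 0 \<le> \<theta> n \<and> \<theta> n < 1"
    and C_lambda: "\<And>n. n \<ge> 1 \<Longrightarrow> 0 < lam n \<and> (\<forall>i\<in>{1..M}. lam n \<le> 2 * L i)"
    and C_beta: "\<And>n. n \<ge> 1 \<Longrightarrow> 0 < \<beta> n \<and> \<beta> n \<le> 1"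
    and C_alpha: "\<And>n. n \<ge> 1 \<Longrightarrow> 0 < \<alpha> n \<and> \<alpha> n \<le> 1"
    and C1: "\<not> summable (\<lambda>n. \<alpha> (Suc n))"
    and C2: "(\<lambda>n. (1 / \<alpha> (Suc n)) * \<bar>1 / lam (Suc n) - 1 / lam n\<bar>) \<longlonglongrightarrow> 0"
    and C3: "(\<lambda>n. (1 / lam (Suc n)) * \<bar>1 - \<alpha> n / \<alpha> (Suc n)\<bar>) \<longlonglongrightarrow> 0"
    and C4: "(\<lambda>n. \<alpha> n / lam n) \<longlonglongrightarrow> 0"
    and C5: "(\<lambda>n. \<theta> n / (\<alpha> (Suc n) * lam (Suc n))) \<longlonglongrightarrow> 0"
    and C6: "\<exists>\<sigma>\<ge>1. \<forall>n\<ge>1. lam n / lam (Suc n) \<le> \<sigma>"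
    and C7: "(\<lambda>n. \<beta> n / \<alpha> (Suc n)) \<longlonglongrightarrow> 0"
    \<comment> \<open>the sets X i\<close>
    and X: "\<And>i. i \<in> {1..M} \<Longrightarrow> bounded (X i) \<and> closed (X i) \<and> convex (X i)
                                   \<and> (\<Inter>j\<in>{1..M}. {p. T j p = p}) \<subseteq> X i"
    \<comment> \<open>the algorithm (modified in one of the two ways, selected by proj_on_y)\<close>
    and alg_d1: "\<And>i. i \<in> {1..M} \<Longrightarrow> d i 1 = - gh i (z i 0)"
    and alg_w1: "\<And>n. n \<ge> 1 \<Longrightarrow> w 1 n = x n"
    and alg_z: "\<And>i n. i \<in> {1..M} \<Longrightarrow> n \<ge> 1 \<Longrightarrow>
                  z i n = w i n + \<theta> n *\<^sub>R (w i n - w i (n - 1))"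
    and alg_d: "\<And>i n. i \<in> {1..M} \<Longrightarrow> n \<ge> 1 \<Longrightarrow>
                  d i (Suc n) = - gh i (z i n) + \<beta> n *\<^sub>R d i n"
    and alg_y: "\<And>i n. i \<in> {1..M} \<Longrightarrow> n \<ge> 1 \<Longrightarrow>
                  y i n = (if proj_on_y
                           then metric_proj (X i) (prox (lam n) (f i) (z i n + lam n *\<^sub>R d i (Suc n)))
                           else prox (lam n) (f i) (z i n + lam n *\<^sub>R d i (Suc n)))"
    and alg_w: "\<And>i n. i \<in> {1..M} \<Longrightarrow> n \<ge> 1 \<Longrightarrow>
                  w (Suc i) n = (if proj_on_y
                                 then \<alpha> n *\<^sub>R u i + (1 - \<alpha> n) *\<^sub>R T i (y i n)
                                 else metric_proj (X i) (\<alpha> n *\<^sub>R u i + (1 - \<alpha> n) *\<^sub>R T i (y i n)))"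
    and alg_x: "\<And>n. n \<ge> 1 \<Longrightarrow> x (Suc n) = w (Suc M) n"
  shows "\<forall>i\<in>{1..M}. bounded ((\<lambda>n. y i n) ` {1..})"
proof (intro ballI)
  fix i assume i: "i \<in> {1..M}"
  have proj_mem: "metric_proj (X j) v \<in> X j" if "j \<in> {1..M}" for j v
    using metric_proj_mem[of "X j" v] X[OF that] A4_S by blast
  show "bounded (y i ` {1..})"
  proof (cases proj_on_y)
    case True
    then have "y i ` {1..} \<subseteq> X i" using alg_y[OF i] proj_mem[OF i] by auto
    then show ?thesis using X[OF i] bounded_subset by blast
  next
    case False
    have w_mem: "w (Suc j) n \<in> X j" if "j \<in> {1..M}" "n \<ge> 1" for j n
      using alg_w[OF that] False proj_mem[OF that(1)] by simp
    obtain j where j: "j \<in> {1..M}" "\<And>n. w i (n + 2) \<in> X j"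
    proof (cases "i = 1")
      case True
      then show ?thesis using that[of M] w_mem[of M] alg_w1 alg_x M by simp
    next
      case False
      then obtain k where "i = Suc k" "k \<in> {1..M}" using i by (cases i) auto
      then show ?thesis using that[of k] w_mem[of k] by simp
    qed
    obtain R where "\<forall>p\<in>X j. norm p \<le> R" using X[OF j(1)] bounded_iff by blast
    then have "norm (w i (n + 2)) \<le> R" for n using j(2) by blast
    then have w_bdd: "Bseq (w i)" by (rule Bseq_offset[OF BseqI'])
    have \<theta>_bdd: "Bseq \<theta>" and lam_bdd: "Bseq lam"
      using C_lim(1,2) by (auto intro: convergent_imp_Bseq convergentI)
    show ?thesis
    proof (rule bounded_inertial_prox_iterates[OF _ _ A2_lip[OF i] w_bdd \<theta>_bdd C_lim(3) lam_bdd])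
      show "convex_on UNIV (f i)" "continuous_on UNIV (f i)" using A1[OF i] by auto
      fix n :: nat assume n: "1 \<le> n"
      show "0 < lam n" using C_lambda[OF n] by simp
      show "z i n = w i n + \<theta> n *\<^sub>R (w i n - w i (n - 1))" by (rule alg_z[OF i n])
      show "d i (Suc n) = - gh i (z i n) + \<beta> n *\<^sub>R d i n" by (rule alg_d[OF i n])
      show "y i n = prox (lam n) (f i) (z i n + lam n *\<^sub>R d i (Suc n))"
        using alg_y[OF i n] False by simp
    qed
  qed
qed

end
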